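(* Let $(X,\mu)$ be a measure space and $p>2$. For all non-zero functions $g,h\in L^p(X,\mu)$ (real or complex valued), $$\|g+h\|_p \leq \left( 1 - \frac{\|g\|_p\|h\|_p}{(\|g\|_p + \|h\|_p)^2} \left\Vert \frac{|g|^{p/2}}{\|g\|_p^{p/2}} - \frac{|h|^{p/2}}{\|h\|_p^{p/2}} \right\Vert_2^2 \right)^{1/p} (\|g\|_p + \|h\|_p).$$
   Context: $\|f\|_q := \left(\int |f|^q\,d\mu\right)^{1/q}$. *)

theory Defs
  imports "HOL-Analysis.Analysis"
begin

definition memLp :: "'a measure \<Rightarrow> real \<Rightarrow> ('a \<Rightarrow> 'b::{banach,second_countable_topology}) \<Rightarrow> bool" where
  "memLp M q f \<longleftrightarrow> f \<in> borel_measurable M \<and> integrable M (\<lambda>x. norm (f x) powr q)"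

definition Lp_norm :: "'a measure \<Rightarrow> real \<Rightarrow> ('a \<Rightarrow> 'b::real_normed_vector) \<Rightarrow> real" where
  "Lp_norm M q f = (\<integral>x. norm (f x) powr q \<partial>M) powr (1 / q)"

end

theory Submission
  imports Defs
begin

(* Put a = \<parallel>g\<parallel>_p, b = \<parallel>h\<parallel>_p, t = a/(a+b), X = (|g|/a)^(p/2), Y = (|h|/b)^(p/2), so that
   \<parallel>X\<parallel>_2 = \<parallel>Y\<parallel>_2 = 1. Pointwise, |g+h| \<le> (a+b)(t |g|/a + (1-t) |h|/b); raising this to the power
   p = 2 (p/2) and using convexity of s \<mapsto> s^(p/2) gives
     |g+h|^p \<le> (a+b)^p (tX + (1-t)Y)^2 = (a+b)^p (tX^2 + (1-t)Y^2 - t(1-t)(X-Y)^2).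
   Integrating yields \<parallel>g+h\<parallel>_p^p \<le> (a+b)^p (1 - t(1-t) \<parallel>X-Y\<parallel>_2^2), and t(1-t) = ab/(a+b)^2. *)

lemma powr_convex_nonneg:
  assumes "q \<ge> 1"
  shows "convex_on {0..} (\<lambda>x::real. x powr q)"
proof
  fix t x y :: real
  assume t: "t > 0" "t < 1" and xy: "x \<in> {0..}" "y \<in> {0..}"
  have scale: "(s * z) powr q \<le> s * z powr q" if "0 \<le> s" "s \<le> 1" "0 \<le> z" for s z :: real
  proof -
    have "s powr q \<le> s powr 1"
      using that assms by (cases "s = 0") (auto intro: powr_le_one_le)
    then show ?thesis
      using that by (simp add: powr_mult mult_right_mono)
  qed
  show "((1 - t) *\<^sub>R x + t *\<^sub>R y) powr q \<le> (1 - t) * x powr q + t * y powr q"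
  proof (cases "x = 0 \<or> y = 0")
    case True
    then show ?thesis
      using t xy scale[of t y] scale[of "1 - t" x] by auto
  next
    case False
    then show ?thesis
      using t xy convex_onD[OF powr_convex[OF assms], of t x y] by auto
  qed
qed (simp add: convex_real_interval)

lemma powr_half_square: "((z::real) powr (p / 2))\<^sup>2 = z powr p"
  by (simp add: power2_eq_square powr_add[symmetric])

lemma convex_combination_square:
  fixes t X Y :: real
  shows "(t * X + (1 - t) * Y)\<^sup>2 = t * X\<^sup>2 + (1 - t) * Y\<^sup>2 - t * (1 - t) * (X - Y)\<^sup>2"
  by (simp add: power2_eq_square algebra_simps)

lemma powr_add_le_weighted_squares:
  fixes n m a b p :: real
  assumes "0 \<le> n" "0 \<le> m" "a > 0" "b > 0" "p \<ge> 2"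
  defines "t \<equiv> a / (a + b)"
    and "X \<equiv> n powr (p / 2) / a powr (p / 2)"
    and "Y \<equiv> m powr (p / 2) / b powr (p / 2)"
  shows "(n + m) powr p \<le> (a + b) powr p * (t * X\<^sup>2 + (1 - t) * Y\<^sup>2 - t * (1 - t) * (X - Y)\<^sup>2)"
proof -
  define u v where "u = n / a" and "v = m / b"
  have t: "0 \<le> t" "t \<le> 1"
    using assms unfolding t_def by auto
  have uv: "0 \<le> u" "0 \<le> v"
    using assms unfolding u_def v_def by auto
  have XY: "X = u powr (p / 2)" "Y = v powr (p / 2)"
    unfolding X_def Y_def u_def v_def using assms by (simp_all add: powr_divide)
  have "(a + b) * t = a" "(a + b) * (1 - t) = b"
    unfolding t_def using assms by (simp_all add: field_simps)
  then have nm: "n + m = (a + b) * (t * u + (1 - t) * v)"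
    unfolding u_def v_def using assms by (simp add: distrib_left mult.assoc[symmetric])
  have convex: "convex_on {0..} (\<lambda>x::real. x powr (p / 2))"
    using assms by (intro powr_convex_nonneg) simp
  have "(t * u + (1 - t) * v) powr (p / 2) \<le> t * X + (1 - t) * Y"
    using convex_onD[OF convex, of "1 - t" u v] t uv by (simp add: XY algebra_simps)
  then have square: "((t * u + (1 - t) * v) powr (p / 2))\<^sup>2 \<le> (t * X + (1 - t) * Y)\<^sup>2"
    by (intro power_mono) auto
  have "(n + m) powr p = (a + b) powr p * ((t * u + (1 - t) * v) powr (p / 2))\<^sup>2"
    unfolding nm powr_half_square using assms t uv by (simp add: powr_mult)
  also have "\<dots> \<le> (a + b) powr p * (t * X + (1 - t) * Y)\<^sup>2"
    using square by (intro mult_left_mono) auto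
  finally show ?thesis
    unfolding convex_combination_square .
qed

lemma integral_norm_powr_pos:
  assumes "memLp M p f" "\<not> (AE x in M. f x = 0)"
  shows "(\<integral>x. norm (f x) powr p \<partial>M) > 0"
proof -
  have int: "integrable M (\<lambda>x. norm (f x) powr p)"
    using assms unfolding memLp_def by auto
  have "(\<integral>x. norm (f x) powr p \<partial>M) \<noteq> 0"
  proof
    assume "(\<integral>x. norm (f x) powr p \<partial>M) = 0"
    then have "AE x in M. norm (f x) powr p = 0"
      using integral_nonneg_eq_0_iff_AE[OF int] by auto
    then have "AE x in M. f x = 0"
      by eventually_elim simp
    then show False
      using assms by simp
  qed
  moreover have "(\<integral>x. norm (f x) powr p \<partial>M) \<ge> 0"
    by (intro integral_nonneg_AE) auto
  ultimately show ?thesis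
    by linarith
qed

lemma Lp_norm_powr: "p \<noteq> 0 \<Longrightarrow> Lp_norm M p f powr p = (\<integral>x. norm (f x) powr p \<partial>M)"
  unfolding Lp_norm_def by (simp add: powr_powr integral_nonneg_AE)

lemma Lp_norm_pos: "memLp M p f \<Longrightarrow> \<not> (AE x in M. f x = 0) \<Longrightarrow> Lp_norm M p f > 0"
  unfolding Lp_norm_def using integral_norm_powr_pos[of M p f] by simp

lemma Lp_norm_2_square: "Lp_norm M 2 f ^ 2 = (\<integral>x. (norm (f x))\<^sup>2 \<partial>M)"
proof -
  have "Lp_norm M 2 f \<ge> 0"
    unfolding Lp_norm_def by simp
  then show ?thesis
    using Lp_norm_powr[of 2 M f] by (simp add: powr_numeral)
qed

lemma
  fixes f :: "'a \<Rightarrow> 'b::{banach,second_countable_topology}"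
  assumes f: "memLp M p f" "\<not> (AE x in M. f x = 0)" and p: "p \<noteq> 0"
  defines "F \<equiv> \<lambda>x. norm (f x) powr (p / 2) / Lp_norm M p f powr (p / 2)"
  shows integrable_normalized_square: "integrable M (\<lambda>x. (F x)\<^sup>2)"
    and integral_normalized_square: "(\<integral>x. (F x)\<^sup>2 \<partial>M) = 1"
proof -
  have F2: "(F x)\<^sup>2 = norm (f x) powr p / (\<integral>x. norm (f x) powr p \<partial>M)" for x
    unfolding F_def Lp_norm_powr[OF p, symmetric] by (simp add: power_divide powr_half_square)
  show "integrable M (\<lambda>x. (F x)\<^sup>2)"
    unfolding F2 using f(1) unfolding memLp_def by simp
  show "(\<integral>x. (F x)\<^sup>2 \<partial>M) = 1"
    unfolding F2 using integral_norm_powr_pos[OF f] by simp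
qed

lemma integrable_square_diff:
  fixes X Y :: "'a \<Rightarrow> real"
  assumes [measurable]: "X \<in> borel_measurable M" "Y \<in> borel_measurable M"
    and "integrable M (\<lambda>x. (X x)\<^sup>2)" "integrable M (\<lambda>x. (Y x)\<^sup>2)"
  shows "integrable M (\<lambda>x. (X x - Y x)\<^sup>2)"
proof (rule Bochner_Integration.integrable_bound)
  show "integrable M (\<lambda>x. 2 * (X x)\<^sup>2 + 2 * (Y x)\<^sup>2)"
    using assms by simp
  have "(X x - Y x)\<^sup>2 \<le> 2 * (X x)\<^sup>2 + 2 * (Y x)\<^sup>2" for x
    using sum_squares_ge_zero[of "X x + Y x" 0] by (simp add: power2_eq_square algebra_simps)
  then show "AE x in M. norm ((X x - Y x)\<^sup>2) \<le> norm (2 * (X x)\<^sup>2 + 2 * (Y x)\<^sup>2)"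
    by simp
qed measurable

lemma Lp_norm_add_powr_le:
  fixes g h :: "'a \<Rightarrow> 'b::{banach,second_countable_topology}"
  assumes p: "p \<ge> 2" and g: "memLp M p g" "\<not> (AE x in M. g x = 0)"
    and h: "memLp M p h" "\<not> (AE x in M. h x = 0)"
  defines "a \<equiv> Lp_norm M p g" and "b \<equiv> Lp_norm M p h"
  defines "X \<equiv> \<lambda>x. norm (g x) powr (p / 2) / a powr (p / 2)"
    and "Y \<equiv> \<lambda>x. norm (h x) powr (p / 2) / b powr (p / 2)"
  shows "Lp_norm M p (\<lambda>x. g x + h x) powr p
           \<le> (a + b) powr p * (1 - a * b / (a + b)\<^sup>2 * (Lp_norm M 2 (\<lambda>x. X x - Y x))\<^sup>2)"
proof -
  define t where "t = a / (a + b)"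
  have ab: "a > 0" "b > 0"
    unfolding a_def b_def using g h by (simp_all add: Lp_norm_pos)
  have [measurable]: "g \<in> borel_measurable M" "h \<in> borel_measurable M"
    using g h unfolding memLp_def by auto
  have [measurable]: "X \<in> borel_measurable M" "Y \<in> borel_measurable M"
    unfolding X_def Y_def by measurable
  have iX: "integrable M (\<lambda>x. (X x)\<^sup>2)" and IX: "(\<integral>x. (X x)\<^sup>2 \<partial>M) = 1"
    unfolding X_def a_def using g p by (simp_all add: integrable_normalized_square integral_normalized_square)
  have iY: "integrable M (\<lambda>x. (Y x)\<^sup>2)" and IY: "(\<integral>x. (Y x)\<^sup>2 \<partial>M) = 1"
    unfolding Y_def b_def using h p by (simp_all add: integrable_normalized_square integral_normalized_square)
  have iD: "integrable M (\<lambda>x. (X x - Y x)\<^sup>2)"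
    using iX iY by (intro integrable_square_diff) measurable
  define R where "R x = (a + b) powr p * (t * (X x)\<^sup>2 + (1 - t) * (Y x)\<^sup>2 - t * (1 - t) * (X x - Y x)\<^sup>2)" for x
  have iR: "integrable M R"
    unfolding R_def using iX iY iD by simp
  have pointwise: "norm (g x + h x) powr p \<le> R x" for x
  proof -
    have "norm (g x + h x) powr p \<le> (norm (g x) + norm (h x)) powr p"
      using p by (intro powr_mono2 norm_triangle_ineq) auto
    also have "\<dots> \<le> R x"
      unfolding R_def t_def X_def Y_def using p ab by (intro powr_add_le_weighted_squares) auto
    finally show ?thesis .
  qed
  have "Lp_norm M p (\<lambda>x. g x + h x) powr p = (\<integral>x. norm (g x + h x) powr p \<partial>M)"
    using p by (simp add: Lp_norm_powr)
  also have "\<dots> \<le> (\<integral>x. R x \<partial>M)"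
  proof (rule integral_mono[OF _ iR pointwise])
    show "integrable M (\<lambda>x. norm (g x + h x) powr p)"
      by (rule Bochner_Integration.integrable_bound[OF iR])
        (use pointwise in \<open>auto intro: order_trans[OF _ abs_ge_self]\<close>)
  qed
  also have "(\<integral>x. R x \<partial>M) = (a + b) powr p * (1 - t * (1 - t) * (\<integral>x. (X x - Y x)\<^sup>2 \<partial>M))"
    unfolding R_def using iX iY iD IX IY by simp
  also have "t * (1 - t) = a * b / (a + b)\<^sup>2"
    unfolding t_def using ab by (simp add: field_simps power2_eq_square)
  finally show ?thesis
    by (simp add: Lp_norm_2_square)
qed

lemma Lp_norm_add_le:
  fixes g h :: "'a \<Rightarrow> 'b::{banach,second_countable_topology}"
  assumes p: "p \<ge> 2" and g: "memLp M p g" "\<not> (AE x in M. g x = 0)"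
    and h: "memLp M p h" "\<not> (AE x in M. h x = 0)"
  shows "Lp_norm M p (\<lambda>x. g x + h x) \<le>
           (1 - (Lp_norm M p g * Lp_norm M p h) / (Lp_norm M p g + Lp_norm M p h)^2 *
                (Lp_norm M 2 (\<lambda>x. norm (g x) powr (p/2) / Lp_norm M p g powr (p/2)
                                 - norm (h x) powr (p/2) / Lp_norm M p h powr (p/2)))^2) powr (1/p)
           * (Lp_norm M p g + Lp_norm M p h)"
    (is "?N \<le> ?K powr (1/p) * (?a + ?b)")
proof -
  have ab: "?a > 0" "?b > 0"
    using g h by (simp_all add: Lp_norm_pos)
  have N: "?N \<ge> 0"
    unfolding Lp_norm_def by simp
  have bound: "?N powr p \<le> (?a + ?b) powr p * ?K"
    using Lp_norm_add_powr_le[OF p g h] by simp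
  then have "0 \<le> (?a + ?b) powr p * ?K"
    using powr_ge_zero order_trans by blast
  moreover have "(?a + ?b) powr p > 0"
    using ab by simp
  ultimately have "?K \<ge> 0"
    using zero_le_mult_iff[of "(?a + ?b) powr p" ?K] by linarith
  have "?N = (?N powr p) powr (1/p)"
    using N p by (simp add: powr_powr)
  also have "\<dots> \<le> ((?a + ?b) powr p * ?K) powr (1/p)"
    using bound p by (intro powr_mono2) auto
  also have "\<dots> = ?K powr (1/p) * (?a + ?b)"
    using \<open>?K \<ge> 0\<close> ab p by (simp add: powr_mult powr_powr)
  finally show ?thesis .
qed

theorem theorem1p4:
  fixes M :: "'a measure" and p :: real
  assumes "p > 2"
  shows "(\<forall>g h :: 'a \<Rightarrow> real.
            memLp M p g \<and> memLp M p h \<and> \<not> (AE x in M. g x = 0) \<and> \<not> (AE x in M. h x = 0) \<longrightarrow>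
            Lp_norm M p (\<lambda>x. g x + h x) \<le>
              (1 - (Lp_norm M p g * Lp_norm M p h) / (Lp_norm M p g + Lp_norm M p h)^2 *
                   (Lp_norm M 2 (\<lambda>x. norm (g x) powr (p/2) / Lp_norm M p g powr (p/2)
                                    - norm (h x) powr (p/2) / Lp_norm M p h powr (p/2)))^2) powr (1/p)
              * (Lp_norm M p g + Lp_norm M p h))
       \<and> (\<forall>g h :: 'a \<Rightarrow> complex.
            memLp M p g \<and> memLp M p h \<and> \<not> (AE x in M. g x = 0) \<and> \<not> (AE x in M. h x = 0) \<longrightarrow>
            Lp_norm M p (\<lambda>x. g x + h x) \<le>
              (1 - (Lp_norm M p g * Lp_norm M p h) / (Lp_norm M p g + Lp_norm M p h)^2 *
                   (Lp_norm M 2 (\<lambda>x. norm (g x) powr (p/2) / Lp_norm M p g powr (p/2)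
                                    - norm (h x) powr (p/2) / Lp_norm M p h powr (p/2)))^2) powr (1/p)
              * (Lp_norm M p g + Lp_norm M p h))"
proof -
  have "p \<ge> 2"
    using assms by simp
  from Lp_norm_add_le[OF this] show ?thesis
    by (intro conjI allI impI; elim conjE; assumption)
qed

end
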